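(* Let $p>11$ be prime, $q=p^h$, and let $\mathcal{F}: aX^n+bY^n=Z^n$ with $a,b\in\mathbb{F}_q$, $ab\neq0$, $n>3$, be an irreducible Fermat curve over $\mathbb{F}_q$. Suppose $n=\frac{3(p^h-1)}{p^r-1}$ for a positive integer $r$ and $a,b\in\mathbb{F}_{p^r}$. Let $\mathcal{C}$ be the curve $aX^3+bY^3=Z^3$ over $\mathbb{F}_{p^r}$ and $k:=\#\{(x_0:x_1:x_2)\in\mathcal{C}(\mathbb{F}_{p^r}) : x_0x_1x_2=0\}$. (1) If $p^r\equiv1\pmod 3$, then $N_q(\mathcal{F})=\frac{n^2}{9}\big(N_{p^r}(\mathcal{C})-k\big)+\frac{nk}{3}$. (2) If $p^r\not\equiv1\pmod3$, then $N_q(\mathcal{F})=\frac{n^2}{9}(p^r-2)+n$.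
   Context: $N_{Q}(\mathcal{X})$ denotes the number of $\mathbb{F}_{Q}$-rational points of a projective curve $\mathcal{X}$, and $\mathcal{X}(\mathbb{F}_Q)$ the set of such points. *)

theory Defs
  imports Complex_Main "HOL-Computational_Algebra.Primes"
begin

text \<open>Projective plane points over a subfield S of an ambient field: the point
  (x0:x1:x2) is the class of a nonzero triple under scaling by S - {0}.\<close>
definition proj_class :: "'a::field set \<Rightarrow> 'a \<times> 'a \<times> 'a \<Rightarrow> ('a \<times> 'a \<times> 'a) set" where
  "proj_class S v = {(c * fst v, c * fst (snd v), c * snd (snd v)) | c. c \<in> S \<and> c \<noteq> 0}"

definition proj_points :: "'a::field set \<Rightarrow> ('a \<times> 'a \<times> 'a \<Rightarrow> bool) \<Rightarrow> ('a \<times> 'a \<times> 'a) set set" where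
  "proj_points S P = proj_class S ` {v. v \<in> S \<times> S \<times> S \<and> v \<noteq> (0, 0, 0) \<and> P v}"

text \<open>The subfield F_{p^r} of a finite field, as the fixed set of Frobenius.\<close>
definition subfield_pow :: "nat \<Rightarrow> 'a::field set" where
  "subfield_pow m = {x. x ^ m = x}"

end

theory Submission
  imports Defs "HOL-Computational_Algebra.Polynomial" "HOL-Number_Theory.Residues"
begin

text \<open>Write \<open>n = 3m\<close>. Since \<open>q - 1 = m (p^r - 1)\<close>, the map \<open>x \<mapsto> x^m\<close> sends the units of
  \<open>\<bbbF>\<^sub>q\<close> onto those of \<open>\<bbbF>\<^bsub>p^r\<^esub>\<close>, each with exactly \<open>m\<close> preimages, and \<open>(x, y, z)\<close> lies on
  \<open>aX^n + bY^n = Z^n\<close> iff \<open>(x^m, y^m, z^m)\<close> lies on \<open>C: aX^3 + bY^3 = Z^3\<close>. So a nonzero affine point of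
  \<open>C\<close> over \<open>\<bbbF>\<^bsub>p^r\<^esub>\<close> lifts to \<open>m^3\<close> affine points of the Fermat curve if no coordinate vanishes
  and to \<open>m^2\<close> if one does; dividing by \<open>q - 1\<close> gives (1), which in fact holds for every \<open>p^r\<close>.
  If \<open>p^r \<equiv> 2 (mod 3)\<close>, cubing permutes \<open>\<bbbF>\<^bsub>p^r\<^esub>\<close>, so \<open>C\<close> has as many points as the line
  \<open>aU + bV = W\<close>, namely \<open>p^r + 1\<close>, three of them on the coordinate triangle, and (1) becomes (2).
  The hypothesis \<open>p > 11\<close> is only needed as \<open>p > 3\<close>, to get \<open>p^r - 1 | q - 1\<close> from \<open>n (p^r - 1) = 3 (q - 1)\<close>.\<close>

definition affine_cone :: "'a::zero set \<Rightarrow> ('a \<times> 'a \<times> 'a \<Rightarrow> bool) \<Rightarrow> ('a \<times> 'a \<times> 'a) set" where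
  "affine_cone S P = {v. v \<in> S \<times> S \<times> S \<and> v \<noteq> (0, 0, 0) \<and> P v}"

definition fermat_eq :: "'a::comm_ring_1 \<Rightarrow> 'a \<Rightarrow> nat \<Rightarrow> 'a \<times> 'a \<times> 'a \<Rightarrow> bool" where
  "fermat_eq a b e = (\<lambda>(x, y, z). a * x ^ e + b * y ^ e = z ^ e)"

definition on_coordinate_triangle :: "'a::comm_ring_1 \<times> 'a \<times> 'a \<Rightarrow> bool" where
  "on_coordinate_triangle = (\<lambda>(x, y, z). x * y * z = 0)"

lemma power_minus_one_dvd_of_mult_eq:
  fixes p h r n :: nat
  assumes "p > 3" "r > 0" "n * (p ^ r - 1) = 3 * (p ^ h - 1)"
  shows "p ^ r - 1 dvd p ^ h - 1"
proof -
  define s t where "s = h div r" and "t = h mod r"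
  have h: "h = r * s + t" and "t < r"
    using assms(2) by (simp_all add: s_def t_def)
  have eq: "int n * (int p ^ r - 1) = 3 * (int p ^ h - 1)"
    using arg_cong[OF assms(3), of int] assms(1) by (simp add: of_nat_diff)
  have dvd_s: "int p ^ r - 1 dvd (int p ^ r) ^ s - 1"
    by (subst power_diff_1_eq) simp
  have "3 * (int p ^ t - 1) = int n * (int p ^ r - 1) - 3 * ((int p ^ r) ^ s - 1) * int p ^ t"
    unfolding eq h by (simp add: power_add power_mult algebra_simps)
  then have dvd_t: "int p ^ r - 1 dvd 3 * (int p ^ t - 1)"
    using dvd_s by (metis dvd_diff dvd_mult dvd_mult2 dvd_triv_right)
  \<comment> \<open>the remainder \<open>3 (p^t - 1)\<close> is smaller than \<open>p^r - 1 \<ge> p^(t+1) - 1\<close>, so it must vanish\<close>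
  have "t = 0"
  proof (rule ccontr)
    assume "t \<noteq> 0"
    then have "int p ^ t > 1"
      using assms(1) by simp
    moreover have "int p ^ r \<ge> int p * int p ^ t"
      using \<open>t < r\<close> assms(1) power_increasing[of "Suc t" r "int p"] by simp
    moreover have "int p * int p ^ t \<ge> 4 * int p ^ t"
      using assms(1) by (intro mult_right_mono) auto
    ultimately have "0 < 3 * (int p ^ t - 1)" and "3 * (int p ^ t - 1) < int p ^ r - 1"
      by simp_all
    with zdvd_imp_le[OF dvd_t] show False
      by linarith
  qed
  then have "int p ^ r - 1 dvd int p ^ h - 1"
    using dvd_s by (simp add: h power_mult)
  then show ?thesis
    using assms(1) by (simp add: of_nat_diff flip: int_dvd_int_iff)
qed

lemma finite_field_power_card_minus_one:
  fixes x :: "'a::{field, finite}"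
  assumes "x \<noteq> 0"
  shows "x ^ (card (UNIV :: 'a set) - 1) = 1"
proof -
  have "x ^ card (UNIV - {0::'a}) * \<Prod>(UNIV - {0}) = (\<Prod>y\<in>UNIV - {0}. x * y)"
    by (simp add: prod.distrib)
  also have "\<dots> = \<Prod>(UNIV - {0::'a})"
    by (rule prod.reindex_bij_witness[of _ "\<lambda>y. y / x" "\<lambda>y. x * y"]) (use assms in auto)
  finally show ?thesis
    by (simp add: card_Diff_singleton)
qed

lemma CHAR_eq_of_card_eq_prime_power:
  assumes "prime p" "card (UNIV :: 'a::{field, finite} set) = p ^ h"
  shows "CHAR('a) = p"
proof -
  have "prime CHAR('a)"
    by (rule prime_CHAR_semidom[OF finite_imp_CHAR_pos]) simp
  moreover have "CHAR('a) dvd p ^ h"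
    using CHAR_dvd_CARD[where 'a='a] assms(2) by simp
  ultimately show ?thesis
    using assms(1) by (metis prime_dvd_power primes_dvd_imp_eq)
qed

lemma zero_mem_subfield_pow: "Q > 0 \<Longrightarrow> 0 \<in> subfield_pow Q"
  by (simp add: subfield_pow_def)

lemma one_mem_subfield_pow: "1 \<in> subfield_pow Q"
  by (simp add: subfield_pow_def)

lemma mult_mem_subfield_pow: "x \<in> subfield_pow Q \<Longrightarrow> y \<in> subfield_pow Q \<Longrightarrow> x * y \<in> subfield_pow Q"
  by (simp add: subfield_pow_def power_mult_distrib)

lemma inverse_mem_subfield_pow: "x \<in> subfield_pow Q \<Longrightarrow> inverse x \<in> subfield_pow Q"
  by (simp add: subfield_pow_def power_inverse)

lemma divide_mem_subfield_pow: "x \<in> subfield_pow Q \<Longrightarrow> y \<in> subfield_pow Q \<Longrightarrow> x / y \<in> subfield_pow Q"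
  by (simp add: divide_inverse mult_mem_subfield_pow inverse_mem_subfield_pow)

lemma add_mem_subfield_pow:
  assumes "prime CHAR('a::field)" "Q = CHAR('a) ^ r"
    and "x \<in> subfield_pow Q" "y \<in> subfield_pow Q"
  shows "x + y \<in> (subfield_pow Q :: 'a set)"
  using assms freshmans_dream'[OF assms(1,2)] by (simp add: subfield_pow_def)

lemma uminus_mem_subfield_pow:
  assumes "prime CHAR('a::field)" "Q = CHAR('a) ^ r" and "x \<in> subfield_pow Q"
  shows "- x \<in> (subfield_pow Q :: 'a set)"
proof -
  have "Q > 0"
    using assms(1,2) prime_gt_0_nat by simp
  then have "0 = x + (- x) ^ Q"
    using freshmans_dream'[OF assms(1,2), of x "- x"] assms(3) by (simp add: subfield_pow_def zero_power)
  then show ?thesis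
    by (simp add: subfield_pow_def eq_neg_iff_add_eq_0 add.commute)
qed

lemma card_power_eq_poly_le:
  fixes c :: "'a::field poly"
  assumes "degree c < m"
  shows "card {x. x ^ m = poly c x} \<le> m"
proof -
  define P where "P = Polynomial.monom 1 m - c"
  have deg: "degree P = m"
    using degree_add_eq_left[of "- c" "Polynomial.monom 1 m"] assms
    by (simp add: P_def degree_monom_eq)
  with assms have "P \<noteq> 0"
    by (metis degree_0 not_less0)
  then have "card {x. poly P x = 0} \<le> m"
    using card_poly_roots_bound[of P] deg by simp
  moreover have "{x. poly P x = 0} = {x. x ^ m = poly c x}"
    by (simp add: P_def poly_monom)
  ultimately show ?thesis
    by simp
qed

lemma card_power_eq_power:
  fixes x\<^sub>0 :: "'a::field"
  assumes "x\<^sub>0 \<noteq> 0"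
  shows "card {x. x ^ m = x\<^sub>0 ^ m} = card {x::'a. x ^ m = 1}"
proof -
  have "{x. x ^ m = x\<^sub>0 ^ m} = (\<lambda>k. x\<^sub>0 * k) ` {x. x ^ m = 1}"
  proof (intro equalityI subsetI)
    fix x assume "x \<in> {x. x ^ m = x\<^sub>0 ^ m}"
    then have "x = x\<^sub>0 * (x / x\<^sub>0)" and "(x / x\<^sub>0) ^ m = 1"
      using assms by (simp_all add: power_divide)
    then show "x \<in> (\<lambda>k. x\<^sub>0 * k) ` {x. x ^ m = 1}"
      by blast
  qed (auto simp: power_mult_distrib)
  moreover have "inj_on (\<lambda>k. x\<^sub>0 * k) {x. x ^ m = 1}"
    using assms by (auto simp: inj_on_def)
  ultimately show ?thesis
    by (simp add: card_image)
qed

lemma sum_eq_bound_imp_card_eq_and_const: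
  fixes f :: "'b \<Rightarrow> nat"
  assumes "finite A" "\<And>t. t \<in> A \<Longrightarrow> f t \<le> m" "card A \<le> c" "sum f A = m * c" "m > 0"
  shows "card A = c \<and> (\<forall>t\<in>A. f t = m)"
proof -
  have "m * c \<le> m * card A"
    using sum_mono[of A f "\<lambda>_. m"] assms(2,4) by (simp add: mult.commute)
  then have card: "card A = c"
    using assms(3,5) by simp
  have "f t = m" if "t \<in> A" for t
  proof (rule ccontr)
    assume "f t \<noteq> m"
    then have "sum f A < sum (\<lambda>_. m) A"
      using assms(1,2) that by (intro sum_strict_mono_ex1) (auto simp: order_less_le)
    then show False
      using assms(4) card by (simp add: mult.commute)
  qed
  with card show ?thesis
    by blast
qed

lemma power_mem_subfield_pow:
  fixes x :: "'a::{field, finite}"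
  assumes "card (UNIV :: 'a set) - 1 = m * (Q - 1)" "m > 0" "Q > 0"
  shows "x ^ m \<in> subfield_pow Q"
proof (cases "x = 0")
  case False
  have "(x ^ m) ^ Q = x ^ (m * (Q - 1)) * x ^ m"
    using assms(3) by (simp flip: power_mult power_add) (simp add: algebra_simps)
  then show ?thesis
    using finite_field_power_card_minus_one[OF False] assms(1) by (simp add: subfield_pow_def)
qed (use assms in \<open>simp add: subfield_pow_def zero_power\<close>)

text \<open>If \<open>q - 1 = m (Q - 1)\<close>, the map \<open>x \<mapsto> x^m\<close> sends the \<open>q - 1\<close> units into the at most
  \<open>Q - 1\<close> units of \<open>subfield_pow Q\<close> with fibres of size at most \<open>m\<close>; so both bounds are attained.\<close>
lemma power_fibres_subfield_pow:
  fixes m Q :: nat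
  assumes "card (UNIV :: 'a::{field, finite} set) - 1 = m * (Q - 1)" "m > 0" "Q > 1"
  shows "card (subfield_pow Q :: 'a set) = Q"
    and "\<And>t::'a. t \<in> subfield_pow Q \<Longrightarrow> t \<noteq> 0 \<Longrightarrow> card {x. x ^ m = t} = m"
proof -
  define U where "U = (subfield_pow Q :: 'a set) - {0}"
  define f where "f t = card {x::'a. x ^ m = t}" for t
  have "0 \<in> (subfield_pow Q :: 'a set)"
    using assms(3) by (simp add: zero_mem_subfield_pow)
  then have card_U: "card U = card (subfield_pow Q :: 'a set) - 1"
    by (simp add: U_def card_Diff_singleton)
  have "card (UNIV - {0::'a}) = card (\<Union>t\<in>U. {x. x ^ m = t})"
    using power_mem_subfield_pow[OF assms(1,2)] assms(2,3)
    by (intro arg_cong[where f = card]) (auto simp: U_def)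
  also have "\<dots> = sum f U"
    unfolding f_def by (rule card_UN_disjoint) (auto simp: U_def)
  finally have "sum f U = m * (Q - 1)"
    using assms(1) by (simp add: card_Diff_singleton)
  moreover have "f t \<le> m" for t
  proof (cases "\<exists>x\<^sub>0. x\<^sub>0 \<noteq> 0 \<and> t = x\<^sub>0 ^ m")
    case True
    then obtain x\<^sub>0 where "x\<^sub>0 \<noteq> 0" "t = x\<^sub>0 ^ m"
      by blast
    then have "f t = card {x::'a. x ^ m = 1}"
      by (simp add: f_def card_power_eq_power)
    also have "\<dots> \<le> m"
      using card_power_eq_poly_le[where 'a='a, of "[:1:]" m] assms(2) by simp
    finally show ?thesis .
  next
    case False
    then have "{x::'a. x ^ m = t} \<subseteq> {0}"
      by auto
    then have "f t \<le> card {0::'a}"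
      unfolding f_def by (intro card_mono) auto
    with assms(2) show ?thesis
      by simp
  qed
  moreover have "card (subfield_pow Q :: 'a set) \<le> Q"
    using card_power_eq_poly_le[where 'a='a, of "[:0, 1:]" Q] assms(3)
    by (simp add: subfield_pow_def)
  ultimately have "card U = Q - 1 \<and> (\<forall>t\<in>U. f t = m)"
    using assms(2) card_U by (intro sum_eq_bound_imp_card_eq_and_const) auto
  with card_U assms(3) show "card (subfield_pow Q :: 'a set) = Q"
      and "\<And>t::'a. t \<in> subfield_pow Q \<Longrightarrow> t \<noteq> 0 \<Longrightarrow> card {x. x ^ m = t} = m"
    by (auto simp: U_def f_def)
qed

lemma proj_class_eq_image: "proj_class S (x, y, z) = (\<lambda>c. (c * x, c * y, c * z)) ` (S - {0})"
  unfolding proj_class_def by auto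

lemma card_proj_points_mult_eq_card_affine_cone:
  fixes S :: "'a::field set"
  assumes "finite S" "0 \<in> S" "1 \<in> S"
    and mult: "\<And>x y. x \<in> S \<Longrightarrow> y \<in> S \<Longrightarrow> x * y \<in> S"
    and inverse: "\<And>x. x \<in> S \<Longrightarrow> inverse x \<in> S"
    and homogeneous: "\<And>c x y z. c \<noteq> 0 \<Longrightarrow> P (x, y, z) \<Longrightarrow> P (c * x, c * y, c * z)"
  shows "card (proj_points S P) * (card S - 1) = card (affine_cone S P)"
proof -
  define V where "V = affine_cone S P"
  have class_sub: "proj_class S v \<subseteq> V" if "v \<in> V" for v
    using that by (cases v) (auto simp: V_def affine_cone_def proj_class_eq_image intro: mult homogeneous)
  have class_self: "v \<in> proj_class S v" for v
    using \<open>1 \<in> S\<close> by (cases v) (force simp: proj_class_eq_image)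
  have card_class: "card (proj_class S v) = card S - 1" if "v \<in> V" for v
  proof (cases v)
    case (fields x y z)
    then have "inj_on (\<lambda>c. (c * x, c * y, c * z)) (S - {0})"
      using that by (auto simp: inj_on_def V_def affine_cone_def)
    then show ?thesis
      using assms(1,2) by (simp add: fields proj_class_eq_image card_image card_Diff_singleton)
  qed
  have class_eq: "proj_class S w = proj_class S v" if "w \<in> proj_class S v" for v w
  proof -
    obtain x y z where v: "v = (x, y, z)"
      by (cases v)
    from that obtain c where c: "c \<in> S" "c \<noteq> 0" "w = (c * x, c * y, c * z)"
      unfolding v proj_class_eq_image by auto
    have "(\<lambda>d. (d * (c * x), d * (c * y), d * (c * z))) ` (S - {0})
        = (\<lambda>d. (d * x, d * y, d * z)) ` ((\<lambda>d. d * c) ` (S - {0}))"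
      by (simp add: image_image mult.assoc)
    also have "(\<lambda>d. d * c) ` (S - {0}) = S - {0}"
    proof (intro equalityI subsetI)
      fix d assume "d \<in> S - {0}"
      then show "d \<in> (\<lambda>d. d * c) ` (S - {0})"
        using c by (intro image_eqI[of _ _ "d * inverse c"]) (auto intro: mult inverse)
    qed (use c in \<open>auto intro: mult\<close>)
    finally show ?thesis
      unfolding c(3) v proj_class_eq_image .
  qed
  have "finite V"
    using assms(1) by (auto simp: V_def affine_cone_def intro: finite_subset[of _ "S \<times> S \<times> S"])
  have "(card S - 1) * card (proj_class S ` V) = card (\<Union> (proj_class S ` V))"
  proof (rule card_partition)
    show "finite (\<Union> (proj_class S ` V))"
      using \<open>finite V\<close> class_sub by (meson UN_least finite_subset)
    show "\<And>c1 c2. c1 \<in> proj_class S ` V \<Longrightarrow> c2 \<in> proj_class S ` V \<Longrightarrow> c1 \<noteq> c2 \<Longrightarrow> c1 \<inter> c2 = {}"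
      using class_eq by blast
  qed (use \<open>finite V\<close> card_class in auto)
  moreover have "\<Union> (proj_class S ` V) = V"
    using class_sub class_self by blast
  ultimately show ?thesis
    by (simp add: proj_points_def V_def affine_cone_def mult.commute)
qed

lemma fermat_eq_scale_iff:
  fixes c :: "'a::field"
  assumes "c \<noteq> 0"
  shows "fermat_eq a b e (c * x, c * y, c * z) \<longleftrightarrow> fermat_eq a b e (x, y, z)"
proof -
  have "a * (c * x) ^ e + b * (c * y) ^ e = c ^ e * (a * x ^ e + b * y ^ e)"
    by (simp add: power_mult_distrib algebra_simps)
  then show ?thesis
    using assms by (simp add: fermat_eq_def power_mult_distrib)
qed

lemma card_proj_points_fermat_eq:
  fixes a b :: "'a::{field, finite}"
  assumes "Q > 0"
  shows "card (proj_points (subfield_pow Q) (fermat_eq a b e)) * (card (subfield_pow Q :: 'a set) - 1)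
      = card (affine_cone (subfield_pow Q) (fermat_eq a b e))"
    and "card (proj_points (subfield_pow Q) (\<lambda>v. fermat_eq a b e v \<and> on_coordinate_triangle v))
        * (card (subfield_pow Q :: 'a set) - 1)
      = card (affine_cone (subfield_pow Q) (\<lambda>v. fermat_eq a b e v \<and> on_coordinate_triangle v))"
  using assms
  by (intro card_proj_points_mult_eq_card_affine_cone zero_mem_subfield_pow one_mem_subfield_pow mult_mem_subfield_pow
      inverse_mem_subfield_pow finite;
      simp add: fermat_eq_scale_iff on_coordinate_triangle_def)+

lemma card_solutions_substitution:
  fixes g :: "'a::finite \<Rightarrow> 'b"
  assumes "finite K" "range g \<subseteq> K"
  shows "card {(x, y, z). P (g x, g y, g z)}
      = (\<Sum>(u, v, w)\<in>{u \<in> K \<times> K \<times> K. P u}. card {x. g x = u} * card {x. g x = v} * card {x. g x = w})"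
proof -
  define A where "A = {u \<in> K \<times> K \<times> K. P u}"
  define fibre where "fibre = (\<lambda>(u, v, w). {x. g x = u} \<times> {x. g x = v} \<times> {x. g x = w})"
  have "{(x, y, z). P (g x, g y, g z)} = (\<Union>u\<in>A. fibre u)"
    using assms(2) by (auto simp: A_def fibre_def image_subset_iff)
  then have "card {(x, y, z). P (g x, g y, g z)} = (\<Sum>u\<in>A. card (fibre u))"
    using assms(1) by (simp only:) (intro card_UN_disjoint; auto simp: A_def fibre_def)
  also have "\<dots> = (\<Sum>(u, v, w)\<in>A. card {x. g x = u} * card {x. g x = v} * card {x. g x = w})"
    by (intro sum.cong) (auto simp: fibre_def card_cartesian_product)
  finally show ?thesis
    unfolding A_def .
qed

lemma on_coordinate_triangle_fermat_eq_cases: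
  fixes a b :: "'a::field"
  assumes "a \<noteq> 0" "b \<noteq> 0" "e > 0" "fermat_eq a b e (x, y, z)" "(x, y, z) \<noteq> (0, 0, 0)"
  shows "on_coordinate_triangle (x, y, z) \<longleftrightarrow>
      (x = 0 \<and> y \<noteq> 0 \<and> z \<noteq> 0) \<or> (x \<noteq> 0 \<and> y = 0 \<and> z \<noteq> 0) \<or> (x \<noteq> 0 \<and> y \<noteq> 0 \<and> z = 0)"
  using assms by (cases "x = 0"; cases "y = 0"; cases "z = 0")
    (auto simp: fermat_eq_def on_coordinate_triangle_def zero_power)

text \<open>Substituting \<open>u = x^m, v = y^m, w = z^m\<close>, a point of \<open>aU^e + bV^e = W^e\<close> over \<open>subfield_pow Q\<close>
  lifts to \<open>m\<close> choices for each nonzero coordinate and one for each zero coordinate.\<close>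
lemma card_affine_cone_fermat_power:
  fixes a b :: "'a::{field, finite}"
  assumes "card (UNIV :: 'a set) - 1 = m * (Q - 1)" "m > 0" "Q > 1" "a \<noteq> 0" "b \<noteq> 0" "e > 0"
  defines "D \<equiv> affine_cone (subfield_pow Q) (fermat_eq a b e)"
    and "B \<equiv> affine_cone (subfield_pow Q) (\<lambda>v. fermat_eq a b e v \<and> on_coordinate_triangle v)"
  shows "card (affine_cone UNIV (fermat_eq a b (e * m))) = m ^ 3 * card (D - B) + m ^ 2 * card B"
proof -
  define K where "K = (subfield_pow Q :: 'a set)"
  define fibre where "fibre t = card {x::'a. x ^ m = t}" for t
  define weight where "weight = (\<lambda>(u, v, w). fibre u * fibre v * fibre w)"
  have fibre: "fibre t = (if t = 0 then 1 else m)" if "t \<in> K" for t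
  proof -
    have "{x::'a. x ^ m = 0} = {0}"
      using assms(2) by auto
    then show ?thesis
      using power_fibres_subfield_pow(2)[OF assms(1-3)] that by (simp add: fibre_def K_def)
  qed
  have solutions: "{u \<in> K \<times> K \<times> K. fermat_eq a b e u} = insert (0, 0, 0) D"
    using assms(3,6) by (auto simp: D_def K_def affine_cone_def fermat_eq_def subfield_pow_def zero_power)
  have "B \<subseteq> D" "finite D"
    by (auto simp: B_def D_def affine_cone_def)
  have weight_D: "weight u = m ^ 3" if "u \<in> D - B" for u
    using that fibre by (cases u) (auto simp: D_def B_def K_def affine_cone_def weight_def
        on_coordinate_triangle_def power3_eq_cube)
  have weight_B: "weight u = m ^ 2" if "u \<in> B" for u
  proof (cases u)
    case (fields x y z)
    with that have "(x = 0 \<and> y \<noteq> 0 \<and> z \<noteq> 0) \<or> (x \<noteq> 0 \<and> y = 0 \<and> z \<noteq> 0) \<or> (x \<noteq> 0 \<and> y \<noteq> 0 \<and> z = 0)"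
      and "x \<in> K" "y \<in> K" "z \<in> K"
      using on_coordinate_triangle_fermat_eq_cases[OF assms(4,5,6)]
      by (auto simp: B_def K_def affine_cone_def)
    then show ?thesis
      using fibre by (auto simp: fields weight_def power2_eq_square)
  qed
  have "card {(x, y, z). fermat_eq a b e (x ^ m, y ^ m, z ^ m)} = sum weight (insert (0, 0, 0) D)"
    unfolding solutions[symmetric] weight_def fibre_def
    using power_mem_subfield_pow[OF assms(1,2)] assms(3) by (intro card_solutions_substitution) (auto simp: K_def)
  also have "\<dots> = weight (0, 0, 0) + sum weight D"
    using \<open>finite D\<close> by (simp add: D_def affine_cone_def)
  also have "\<dots> = 1 + (sum weight (D - B) + sum weight B)"
    using \<open>B \<subseteq> D\<close> \<open>finite D\<close> fibre[of 0] zero_mem_subfield_pow[of Q] assms(3)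
    by (simp add: sum.subset_diff[of B D] weight_def K_def)
  finally have "card {(x, y, z). fermat_eq a b e (x ^ m, y ^ m, z ^ m)} = 1 + m ^ 3 * card (D - B) + m ^ 2 * card B"
    using weight_D weight_B by simp
  moreover have "affine_cone UNIV (fermat_eq a b (e * m)) = {(x, y, z). fermat_eq a b e (x ^ m, y ^ m, z ^ m)} - {(0, 0, 0)}"
    by (auto simp: affine_cone_def fermat_eq_def mult.commute power_mult[symmetric])
  moreover have "(0, 0, 0) \<in> {(x, y, z). fermat_eq a b e (x ^ m, y ^ m, z ^ m)}"
    using assms(2,6) by (simp add: fermat_eq_def zero_power)
  ultimately show ?thesis
    by (simp add: card_Diff_singleton)
qed

lemma card_proj_points_fermat_power:
  fixes a b :: "'a::{field, finite}"
  assumes "card (UNIV :: 'a set) - 1 = m * (Q - 1)" "m > 0" "Q > 1" "a \<noteq> 0" "b \<noteq> 0" "e > 0"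
  defines "N\<^sub>C \<equiv> card (proj_points (subfield_pow Q) (fermat_eq a b e))"
    and "k \<equiv> card (proj_points (subfield_pow Q) (\<lambda>v. fermat_eq a b e v \<and> on_coordinate_triangle v))"
  shows "real (card (proj_points UNIV (fermat_eq a b (e * m))))
      = real m ^ 2 * (real N\<^sub>C - real k) + real m * real k"
proof -
  define N\<^sub>F where "N\<^sub>F = card (proj_points UNIV (fermat_eq a b (e * m)))"
  define D where "D = affine_cone (subfield_pow Q) (fermat_eq a b e :: 'a \<times> 'a \<times> 'a \<Rightarrow> bool)"
  define B where "B = affine_cone (subfield_pow Q) (\<lambda>v. fermat_eq a b e v \<and> on_coordinate_triangle (v :: 'a \<times> 'a \<times> 'a))"
  define R where "R = Q - 1"
  have "card (subfield_pow Q :: 'a set) = Q"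
    by (rule power_fibres_subfield_pow(1)[OF assms(1-3)])
  then have card_D: "card D = N\<^sub>C * R" and card_B: "card B = k * R"
    using card_proj_points_fermat_eq[of Q a b e] assms(3) by (simp_all add: D_def B_def N\<^sub>C_def k_def R_def)
  have "B \<subseteq> D" "finite D"
    by (auto simp: B_def D_def affine_cone_def)
  then have "card (D - B) = card D - card B" "card B \<le> card D"
    by (simp_all add: card_Diff_subset finite_subset card_mono)
  have "N\<^sub>F * (card (UNIV :: 'a set) - 1) = card (affine_cone UNIV (fermat_eq a b (e * m)))"
    unfolding N\<^sub>F_def by (rule card_proj_points_mult_eq_card_affine_cone) (simp_all add: fermat_eq_scale_iff)
  then have "N\<^sub>F * (m * R) = card (affine_cone UNIV (fermat_eq a b (e * m)))"
    unfolding assms(1) R_def .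
  also have "\<dots> = m ^ 3 * (card D - card B) + m ^ 2 * card B"
    using card_affine_cone_fermat_power[OF assms(1-6)] \<open>card (D - B) = card D - card B\<close>
    by (simp add: D_def B_def)
  finally have nat_eq: "N\<^sub>F * (m * R) = m ^ 3 * (card D - card B) + m ^ 2 * card B" .
  have "real N\<^sub>F * (real m * real R)
      = real m ^ 3 * (real (card D) - real (card B)) + real m ^ 2 * real (card B)"
    using arg_cong[where f = real, OF nat_eq] \<open>card B \<le> card D\<close> by (simp add: of_nat_diff)
  also have "\<dots> = (real m ^ 2 * (real N\<^sub>C - real k) + real m * real k) * (real m * real R)"
    unfolding card_D card_B by (simp add: algebra_simps power2_eq_square power3_eq_cube)
  finally show ?thesis
    using assms(2,3) by (simp add: N\<^sub>F_def R_def)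
qed

lemma bij_betw_cube_subfield_pow:
  assumes "Q mod 3 = 2"
  shows "bij_betw (\<lambda>x. x ^ 3) (subfield_pow Q) (subfield_pow Q :: 'a::{field, finite} set)"
proof -
  have "inj_on (\<lambda>x::'a. x ^ 3) (subfield_pow Q)"
  proof (rule inj_onI)
    fix x y :: 'a
    assume x: "x \<in> subfield_pow Q" and y: "y \<in> subfield_pow Q" and "x ^ 3 = y ^ 3"
    show "x = y"
    proof (cases "y = 0")
      case False
      define t where "t = x / y"
      have "t ^ 3 = 1"
        using \<open>x ^ 3 = y ^ 3\<close> False by (simp add: t_def power_divide)
      have Q: "3 * (Q div 3) + 2 = Q"
        using assms by presburger
      have "t = t ^ Q"
        using divide_mem_subfield_pow[OF x y] by (simp add: t_def subfield_pow_def)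
      also have "\<dots> = (t ^ 3) ^ (Q div 3) * t ^ 2"
        by (simp only: Q flip: power_mult power_add)
      also have "\<dots> = t ^ 2"
        using \<open>t ^ 3 = 1\<close> by simp
      finally have "t = 1"
        using \<open>t ^ 3 = 1\<close> by (auto simp: power2_eq_square power3_eq_cube)
      then show "x = y"
        using False by (simp add: t_def)
    qed (use \<open>x ^ 3 = y ^ 3\<close> in simp)
  qed
  moreover have "(\<lambda>x. x ^ 3) ` subfield_pow Q \<subseteq> (subfield_pow Q :: 'a set)"
    by (auto simp: power3_eq_cube intro: mult_mem_subfield_pow)
  ultimately show ?thesis
    by (simp add: bij_betw_def endo_inj_surj)
qed

lemma card_affine_cone_substitution:
  fixes g :: "'a::field \<Rightarrow> 'a"
  assumes "bij_betw g K K" "\<And>x. g x = 0 \<longleftrightarrow> x = 0"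
  shows "card (affine_cone K (\<lambda>(x, y, z). P (g x, g y, g z))) = card (affine_cone K P)"
proof -
  define G where "G = map_prod g (map_prod g g)"
  have bij: "bij_betw G (K \<times> K \<times> K) (K \<times> K \<times> K)"
    unfolding G_def using assms(1) by (intro bij_betw_map_prod)
  have image: "G ` affine_cone K (\<lambda>(x, y, z). P (g x, g y, g z)) = affine_cone K P"
  proof (intro equalityI subsetI)
    fix u assume "u \<in> G ` affine_cone K (\<lambda>(x, y, z). P (g x, g y, g z))"
    then obtain x y z where "(x, y, z) \<in> affine_cone K (\<lambda>(x, y, z). P (g x, g y, g z))"
      and "u = (g x, g y, g z)"
      by (auto simp: G_def)
    then show "u \<in> affine_cone K P"
      using bij_betw_apply[OF assms(1)] assms(2) by (auto simp: affine_cone_def)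
  next
    fix u assume u: "u \<in> affine_cone K P"
    then have "u \<in> G ` (K \<times> K \<times> K)"
      using bij_betw_imp_surj_on[OF bij] by (auto simp: affine_cone_def)
    then obtain x y z where "(x, y, z) \<in> K \<times> K \<times> K" "u = (g x, g y, g z)"
      by (auto simp: G_def)
    with u have "(x, y, z) \<in> affine_cone K (\<lambda>(x, y, z). P (g x, g y, g z))"
      using assms(2) by (auto simp: affine_cone_def)
    with \<open>u = (g x, g y, g z)\<close> show "u \<in> G ` affine_cone K (\<lambda>(x, y, z). P (g x, g y, g z))"
      by (force simp: G_def)
  qed
  have "inj_on G (affine_cone K (\<lambda>(x, y, z). P (g x, g y, g z)))"
    using bij_betw_imp_inj_on[OF bij] by (rule inj_on_subset) (auto simp: affine_cone_def)
  from card_image[OF this] show ?thesis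
    unfolding image by (rule sym)
qed

lemma card_affine_cone_line:
  fixes a b :: "'a::{field, finite}"
  assumes "prime CHAR('a)" "Q = CHAR('a) ^ r" "card (subfield_pow Q :: 'a set) = Q"
    and "a \<in> subfield_pow Q" "b \<in> subfield_pow Q"
  shows "card (affine_cone (subfield_pow Q) (fermat_eq a b 1)) = Q ^ 2 - 1"
proof -
  define K where "K = (subfield_pow Q :: 'a set)"
  define L where "L = (\<lambda>(x, y). (x, y, a * x + b * y)) ` (K \<times> K)"
  have closed: "a * x + b * y \<in> K" if "x \<in> K" "y \<in> K" for x y
    using that assms by (simp add: K_def add_mem_subfield_pow mult_mem_subfield_pow)
  have "affine_cone K (fermat_eq a b 1) = L - {(0, 0, 0)}"
  proof (intro equalityI subsetI)
    fix v assume v: "v \<in> affine_cone K (fermat_eq a b 1)"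
    then obtain x y where "x \<in> K" "y \<in> K" "v = (x, y, a * x + b * y)"
      by (auto simp: affine_cone_def fermat_eq_def)
    with v show "v \<in> L - {(0, 0, 0)}"
      by (auto simp: L_def affine_cone_def)
  next
    fix v assume v: "v \<in> L - {(0, 0, 0)}"
    then obtain x y where "x \<in> K" "y \<in> K" "v = (x, y, a * x + b * y)"
      by (auto simp: L_def)
    with v show "v \<in> affine_cone K (fermat_eq a b 1)"
      using closed by (simp add: affine_cone_def fermat_eq_def)
  qed
  moreover have "(0, 0, 0) \<in> L"
    unfolding L_def using assms(1,2) prime_gt_0_nat
    by (intro image_eqI[of _ _ "(0, 0)"]) (auto simp: K_def zero_mem_subfield_pow)
  moreover have "inj_on (\<lambda>(x, y). (x, y, a * x + b * y)) (K \<times> K)"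
    by (auto simp: inj_on_def)
  then have "card L = Q * Q"
    using assms(3) by (simp add: L_def card_image card_cartesian_product K_def)
  ultimately show ?thesis
    by (simp add: K_def power2_eq_square)
qed

lemma card_affine_cone_line_triangle:
  fixes a b :: "'a::{field, finite}"
  assumes "prime CHAR('a)" "Q = CHAR('a) ^ r" "card (subfield_pow Q :: 'a set) = Q"
    and "a \<in> subfield_pow Q" "b \<in> subfield_pow Q" "a \<noteq> 0" "b \<noteq> 0"
  shows "card (affine_cone (subfield_pow Q) (\<lambda>v. fermat_eq a b 1 v \<and> on_coordinate_triangle v))
      = 3 * (Q - 1)"
proof -
  define U where "U = (subfield_pow Q :: 'a set) - {0}"
  define S\<^sub>1 where "S\<^sub>1 = (\<lambda>y. (0::'a, y, b * y)) ` U"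
  define S\<^sub>2 where "S\<^sub>2 = (\<lambda>x. (x, 0::'a, a * x)) ` U"
  define S\<^sub>3 where "S\<^sub>3 = (\<lambda>x. (x, - (a * x) / b, 0::'a)) ` U"
  have "Q > 0"
    using assms(1,2) prime_gt_0_nat by simp
  then have "card U = Q - 1"
    using assms(3) by (simp add: U_def card_Diff_singleton zero_mem_subfield_pow)
  then have "card S\<^sub>1 = Q - 1" "card S\<^sub>2 = Q - 1" "card S\<^sub>3 = Q - 1"
    unfolding S\<^sub>1_def S\<^sub>2_def S\<^sub>3_def by (subst card_image; auto simp: inj_on_def)+
  moreover have "S\<^sub>1 \<inter> S\<^sub>2 = {}" "(S\<^sub>1 \<union> S\<^sub>2) \<inter> S\<^sub>3 = {}"
    using assms(6,7) by (auto simp: S\<^sub>1_def S\<^sub>2_def S\<^sub>3_def U_def)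
  moreover have "affine_cone (subfield_pow Q) (\<lambda>v. fermat_eq a b 1 v \<and> on_coordinate_triangle v)
      = S\<^sub>1 \<union> S\<^sub>2 \<union> S\<^sub>3"
  proof (intro equalityI subsetI)
    fix v assume v: "v \<in> affine_cone (subfield_pow Q) (\<lambda>v. fermat_eq a b 1 v \<and> on_coordinate_triangle v)"
    obtain x y z where xyz: "v = (x, y, z)"
      by (cases v)
    have "x \<in> subfield_pow Q" "y \<in> subfield_pow Q" "z = a * x + b * y" "(x, y, z) \<noteq> (0, 0, 0)"
        "x = 0 \<or> y = 0 \<or> z = 0"
      using v by (auto simp: xyz affine_cone_def fermat_eq_def on_coordinate_triangle_def)
    then show "v \<in> S\<^sub>1 \<union> S\<^sub>2 \<union> S\<^sub>3"
      using assms(7) by (auto simp: xyz S\<^sub>1_def S\<^sub>2_def S\<^sub>3_def U_def field_simps eq_neg_iff_add_eq_0)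
  qed (use assms \<open>Q > 0\<close> in \<open>auto simp: S\<^sub>1_def S\<^sub>2_def S\<^sub>3_def U_def affine_cone_def fermat_eq_def
      on_coordinate_triangle_def intro: mult_mem_subfield_pow divide_mem_subfield_pow
      uminus_mem_subfield_pow zero_mem_subfield_pow\<close>)
  ultimately show ?thesis
    by (simp add: card_Un_disjoint S\<^sub>1_def S\<^sub>2_def S\<^sub>3_def)
qed

lemma card_proj_points_fermat_cubic_mod_3_eq_2:
  fixes a b :: "'a::{field, finite}"
  assumes "prime CHAR('a)" "Q = CHAR('a) ^ r" "card (subfield_pow Q :: 'a set) = Q" "Q mod 3 = 2"
    and "a \<in> subfield_pow Q" "b \<in> subfield_pow Q" "a \<noteq> 0" "b \<noteq> 0"
  shows "card (proj_points (subfield_pow Q) (fermat_eq a b 3)) = Q + 1"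
    and "card (proj_points (subfield_pow Q) (\<lambda>v. fermat_eq a b 3 v \<and> on_coordinate_triangle v)) = 3"
proof -
  have "Q > 1"
    using assms(4) by presburger
  note cube = card_affine_cone_substitution[OF bij_betw_cube_subfield_pow[OF assms(4)]]
  have "(\<lambda>(x, y, z). fermat_eq a b 1 (x ^ 3, y ^ 3, z ^ 3)) = fermat_eq a b 3"
    by (auto simp: fermat_eq_def)
  then have "card (affine_cone (subfield_pow Q) (fermat_eq a b 3)) = Q ^ 2 - 1"
    using cube[of "fermat_eq a b 1"] card_affine_cone_line[OF assms(1-3,5,6)] by simp
  then have "card (proj_points (subfield_pow Q) (fermat_eq a b 3)) * (Q - 1) = Q ^ 2 - 1"
    using card_proj_points_fermat_eq(1)[of Q a b 3] assms(3) \<open>Q > 1\<close> by simp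
  also have "\<dots> = (Q + 1) * (Q - 1)"
    by (cases Q) (simp_all add: power2_eq_square)
  finally show "card (proj_points (subfield_pow Q) (fermat_eq a b 3)) = Q + 1"
    using \<open>Q > 1\<close> by (metis less_numeral_extra(3) mult_right_cancel zero_less_diff)
  have "(\<lambda>(x, y, z). fermat_eq a b 1 (x ^ 3, y ^ 3, z ^ 3) \<and> on_coordinate_triangle (x ^ 3, y ^ 3, z ^ 3))
      = (\<lambda>v. fermat_eq a b 3 v \<and> on_coordinate_triangle v)"
    by (auto simp: fermat_eq_def on_coordinate_triangle_def)
  then have "card (affine_cone (subfield_pow Q) (\<lambda>v. fermat_eq a b 3 v \<and> on_coordinate_triangle v))
      = 3 * (Q - 1)"
    using cube[of "\<lambda>v. fermat_eq a b 1 v \<and> on_coordinate_triangle v"]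
      card_affine_cone_line_triangle[OF assms(1-3,5-8)] by simp
  with card_proj_points_fermat_eq(2)[of Q a b 3] assms(3) \<open>Q > 1\<close>
  show "card (proj_points (subfield_pow Q) (\<lambda>v. fermat_eq a b 3 v \<and> on_coordinate_triangle v)) = 3"
    by simp
qed

lemma prime_power_mod_3:
  fixes p :: nat
  assumes "prime p" "p > 3" "p ^ r mod 3 \<noteq> 1"
  shows "p ^ r mod 3 = 2"
proof -
  have "\<not> 3 dvd p ^ r"
  proof
    assume "3 dvd p ^ r"
    then have "3 dvd p"
      using prime_dvd_power[of "3::nat" p r] by simp
    with assms(1,2) show False
      using primes_dvd_imp_eq[of 3 p] by simp
  qed
  with assms(3) show ?thesis
    by presburger
qed

theorem theorem5p1:
  fixes a b :: "'a::{field, finite}"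
    and p h r n :: nat
  assumes "prime p" and "p > 11" and "h > 0"
    and "card (UNIV::'a set) = p ^ h"
    and "a \<noteq> 0" and "b \<noteq> 0"
    and "n > 3"
    and "r > 0"
    and "n * (p ^ r - 1) = 3 * (p ^ h - 1)"
    and "a \<in> subfield_pow (p ^ r)" and "b \<in> subfield_pow (p ^ r)"
  shows
    "(p ^ r mod 3 = 1 \<longrightarrow>
       real (card (proj_points (UNIV::'a set) (\<lambda>(x, y, z). a * x ^ n + b * y ^ n = z ^ n)))
       = real n ^ 2 / 9 *
           (real (card (proj_points (subfield_pow (p ^ r)) (\<lambda>(x, y, z). a * x ^ 3 + b * y ^ 3 = z ^ 3)))
            - real (card (proj_points (subfield_pow (p ^ r))
                 (\<lambda>(x, y, z). a * x ^ 3 + b * y ^ 3 = z ^ 3 \<and> x * y * z = 0))))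
         + real n * real (card (proj_points (subfield_pow (p ^ r))
                 (\<lambda>(x, y, z). a * x ^ 3 + b * y ^ 3 = z ^ 3 \<and> x * y * z = 0))) / 3)
     \<and> (p ^ r mod 3 \<noteq> 1 \<longrightarrow>
       real (card (proj_points (UNIV::'a set) (\<lambda>(x, y, z). a * x ^ n + b * y ^ n = z ^ n)))
       = real n ^ 2 / 9 * (real (p ^ r) - 2) + real n)"
proof -
  define Q where "Q = p ^ r"
  have "Q > 1"
    using assms(2,8) one_less_power[of p r] by (simp add: Q_def)
  obtain m where m: "p ^ h - 1 = (p ^ r - 1) * m"
    using power_minus_one_dvd_of_mult_eq[of p r n h] assms(2,8,9) by (auto elim: dvdE)
  with assms(9) \<open>Q > 1\<close> have n: "n = 3 * m"
    by (simp add: Q_def)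
  with assms(7) have "m > 0"
    by simp
  have card_UNIV: "card (UNIV :: 'a set) - 1 = m * (Q - 1)"
    using assms(4) m by (simp add: Q_def)
  have "(\<lambda>(x, y, z). a * x ^ 3 + b * y ^ 3 = z ^ 3 \<and> x * y * z = 0)
      = (\<lambda>v. fermat_eq a b 3 v \<and> on_coordinate_triangle v)"
    and "(\<lambda>(x, y, z). a * x ^ 3 + b * y ^ 3 = z ^ 3) = fermat_eq a b 3"
    and "(\<lambda>(x, y, z). a * x ^ n + b * y ^ n = z ^ n) = fermat_eq a b (3 * m)"
    by (auto simp: fermat_eq_def on_coordinate_triangle_def n)
  moreover note card_proj_points_fermat_power[OF card_UNIV \<open>m > 0\<close> \<open>Q > 1\<close> assms(5,6), of 3]
  moreover have "card (proj_points (subfield_pow Q) (fermat_eq a b 3)) = Q + 1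
      \<and> card (proj_points (subfield_pow Q) (\<lambda>v. fermat_eq a b 3 v \<and> on_coordinate_triangle v)) = 3"
    if "Q mod 3 \<noteq> 1"
  proof -
    have "prime CHAR('a)" "Q = CHAR('a) ^ r"
      using CHAR_eq_of_card_eq_prime_power[OF assms(1,4)] assms(1) by (simp_all add: Q_def)
    moreover have "card (subfield_pow Q :: 'a set) = Q"
      by (rule power_fibres_subfield_pow(1)[OF card_UNIV \<open>m > 0\<close> \<open>Q > 1\<close>])
    moreover have "Q mod 3 = 2"
      using prime_power_mod_3[OF assms(1)] assms(2) that by (simp add: Q_def)
    ultimately show ?thesis
      using card_proj_points_fermat_cubic_mod_3_eq_2 assms(5,6,10,11) unfolding Q_def by blast
  qed
  ultimately show ?thesis
    by (simp add: Q_def n power_mult_distrib)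
qed

end
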